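(* For every $r_0\in(0,1/2]$ there exist constants $c,C>0$ and $d_0$ (depending only on $r_0$) such that the following holds for all $d\ge d_0$. Let $[d]=I_0\sqcup I_1$ with $\min\{|I_0|,|I_1|\}\ge r_0d$, and fix $i^*\in I_1$. Let $p_{\mathrm{ex}}$ be the law of $x\in\{0,1\}^d$ generated as follows: $b\sim\mathrm{Bern}(1/2)$; $x^i=b$ for all $i\in I_0$; $x^i$, $i\in I_1\setminus\{i^*\}$, i.i.d. $\mathrm{Bern}(1/2)$ independent of $b$; and $x^{i^*}=(b+\sum_{i\in I_1\setminus\{i^*\}}x^i)\bmod 2$. Then $$cd\le\mathcal B(p_{\mathrm{ex}})\le Cd,\qquad cd\le\mathcal C(p_{\mathrm{ex}})\le Cd,\qquad \mathcal D(p_{\mathrm{ex}})\le C.$$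
   Context: For $x\sim q$ on $\{0,1\}^d$: total correlation $\mathcal C(q)=\sum_{i=1}^d\mathcal H(x^i)-\mathcal H(x)$ and dual total correlation $\mathcal B(q)=\mathcal H(x)-\sum_{i=1}^d\mathcal H(x^i\mid x^{-i})$ ($\mathcal H$ Shannon entropy, $x^{-i}$ is $x$ without coordinate $i$). Masking noising process from $q$: each coordinate independently is replaced by the symbol MASK at an Exp(1) time and stays masked; $x_t$ denotes the state at time $t$. $\mathcal I(t)=\sum_{i\neq j\in[d]}\mathrm I\big(x_t^i;x_t^j\mid (x_t^k)_{k\notin\{i,j\}}\big)$ (conditional mutual information, MASK treated as a symbol), and the effective total correlation is $\mathcal D(q)=\int_0^\infty\min(1,t)\,\mathcal I(t)\,dt$. *)

theory Defs
  imports "HOL-Probability.Probability"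
begin

text \<open>Coordinates of x in {0,1}^d are indexed by {..<d}; a state is a function
  nat => 'a (values outside {..<d} are irrelevant/constant). Entropy uses the natural
  logarithm (the choice of base only rescales the constants c, C).\<close>

definition shannon_entropy :: "'b pmf \<Rightarrow> real" where
  "shannon_entropy p = - (\<Sum>x\<in>set_pmf p. pmf p x * ln (pmf p x))"

definition marg :: "nat set \<Rightarrow> (nat \<Rightarrow> 'a) pmf \<Rightarrow> (nat \<Rightarrow> 'a) pmf" where
  "marg J p = map_pmf (\<lambda>x. restrict x J) p"

definition ent :: "nat set \<Rightarrow> (nat \<Rightarrow> 'a) pmf \<Rightarrow> real" where
  "ent J p = shannon_entropy (marg J p)"

definition cond_ent :: "nat set \<Rightarrow> nat set \<Rightarrow> (nat \<Rightarrow> 'a) pmf \<Rightarrow> real" where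
  "cond_ent J K p = ent (J \<union> K) p - ent K p"

definition cond_mi :: "nat \<Rightarrow> nat \<Rightarrow> nat set \<Rightarrow> (nat \<Rightarrow> 'a) pmf \<Rightarrow> real" where
  "cond_mi i j K p = cond_ent {i} K p - cond_ent {i} ({j} \<union> K) p"

definition total_corr :: "nat \<Rightarrow> (nat \<Rightarrow> 'a) pmf \<Rightarrow> real" where
  "total_corr d q = (\<Sum>i<d. ent {i} q) - ent {..<d} q"

definition dual_total_corr :: "nat \<Rightarrow> (nat \<Rightarrow> 'a) pmf \<Rightarrow> real" where
  "dual_total_corr d q = ent {..<d} q - (\<Sum>i<d. cond_ent {i} ({..<d} - {i}) q)"

text \<open>Masking noising process: each coordinate is independently masked (None = MASK)
  by time t with probability 1 - exp(-t) (Exp(1) masking time).\<close>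
definition mask :: "(nat \<Rightarrow> bool) \<Rightarrow> (nat \<Rightarrow> 'a) \<Rightarrow> (nat \<Rightarrow> 'a option)" where
  "mask M x = (\<lambda>i. if M i then None else Some (x i))"

definition noised :: "nat \<Rightarrow> real \<Rightarrow> (nat \<Rightarrow> 'a) pmf \<Rightarrow> (nat \<Rightarrow> 'a option) pmf" where
  "noised d t q = do {
     x \<leftarrow> q;
     M \<leftarrow> Pi_pmf {..<d} False (\<lambda>_. bernoulli_pmf (1 - exp (- t)));
     return_pmf (mask M x) }"

definition calI :: "nat \<Rightarrow> (nat \<Rightarrow> 'a) pmf \<Rightarrow> real \<Rightarrow> real" where
  "calI d q t = (\<Sum>i<d. \<Sum>j\<in>{..<d} - {i}. cond_mi i j ({..<d} - {i, j}) (noised d t q))"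

definition eff_total_corr :: "nat \<Rightarrow> (nat \<Rightarrow> 'a) pmf \<Rightarrow> ennreal" where
  "eff_total_corr d q = (\<integral>\<^sup>+ t \<in> {0<..}. ennreal (min 1 t * calI d q t) \<partial>lborel)"

text \<open>The example distribution p_ex (True = 1, False = 0).\<close>
definition p_ex :: "nat set \<Rightarrow> nat set \<Rightarrow> nat \<Rightarrow> (nat \<Rightarrow> bool) pmf" where
  "p_ex I0 I1 istar = do {
     b \<leftarrow> bernoulli_pmf (1/2);
     z \<leftarrow> Pi_pmf (I1 - {istar}) False (\<lambda>_. bernoulli_pmf (1/2));
     return_pmf (\<lambda>i. if i \<in> I0 then b
                     else if i = istar then (b \<noteq> odd (card {j \<in> I1 - {istar}. z j}))
                     else z i) }"

end

theory Submission
  imports Defs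
begin

text \<open>
  Under p_ex the coordinates in I1 are i.i.d. fair bits and every coordinate in I0 equals their
  parity, so each sub-vector x^S is a uniformly distributed GF(2)-linear image of these bits and
  its entropy is ln 2 times the rank min (|I1|, |S \<inter> I1| + [S meets I0]). This gives
  C = |I0| ln 2 and B = |I1| ln 2 at once.

  Under masking, the conditional mutual information of x^i and x^j given the other coordinates is
  exp (-2t) times the average, over the random set U of unmasked other coordinates, of the second
  difference H(x^(U+i)) + H(x^(U+j)) - H(x^U) - H(x^(U+i+j)). For p_ex this is at most
  ln 2 ([U misses I0] + [U contains I1 - {i, j}]), whose averages are at most
  (1 - exp (-t))^(|I0|-2) and exp (-t)^(|I1|-2). As min (1, t) \<le> 2 (1 - exp (-t)), integrating
  yields Beta integrals of order 1/|I0|^2 + 1/|I1|^2, which absorb the d^2 pairs (i, j) once both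
  parts have size at least r0 d.
\<close>

section \<open>Entropy of finite distributions\<close>

lemma shannon_entropy_map_inj:
  assumes "inj_on f (set_pmf p)"
  shows "shannon_entropy (map_pmf f p) = shannon_entropy p"
proof -
  have "shannon_entropy (map_pmf f p)
      = - (\<Sum>x\<in>set_pmf p. pmf (map_pmf f p) (f x) * ln (pmf (map_pmf f p) (f x)))"
    by (simp add: shannon_entropy_def sum.reindex[OF assms])
  also have "\<dots> = shannon_entropy p"
    using pmf_map_inj[OF assms] by (simp add: shannon_entropy_def)
  finally show ?thesis .
qed

lemma shannon_entropy_return_pmf [simp]: "shannon_entropy (return_pmf x) = 0"
  by (simp add: shannon_entropy_def)

lemma shannon_entropy_bernoulli_half: "shannon_entropy (bernoulli_pmf (1/2)) = ln 2"
  by (simp add: shannon_entropy_def UNIV_bool ln_div)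

lemma pmf_bind_disjoint:
  assumes fin: "finite (set_pmf M)"
    and disj: "\<And>a b. a \<in> set_pmf M \<Longrightarrow> b \<in> set_pmf M \<Longrightarrow> a \<noteq> b \<Longrightarrow>
      set_pmf (N a) \<inter> set_pmf (N b) = {}"
    and a: "a \<in> set_pmf M" and w: "w \<in> set_pmf (N a)"
  shows "pmf (bind_pmf M N) w = pmf M a * pmf (N a) w"
proof -
  have "pmf (bind_pmf M N) w = (\<Sum>x\<in>set_pmf M. pmf (N x) w * pmf M x)"
    unfolding pmf_bind by (rule integral_measure_pmf_real[OF fin]) auto
  also have "\<dots> = pmf (N a) w * pmf M a + (\<Sum>x\<in>set_pmf M - {a}. pmf (N x) w * pmf M x)"
    by (simp add: sum.remove[OF fin a])
  also have "(\<Sum>x\<in>set_pmf M - {a}. pmf (N x) w * pmf M x) = 0"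
    using disj[OF _ a] w by (intro sum.neutral) (auto simp: set_pmf_eq)
  finally show ?thesis by simp
qed

text \<open>Chain rule: if the branches of a bind have disjoint supports, the branch is a function
  of the outcome, so H(bind M N) = H(M) + H(outcome | branch).\<close>

lemma shannon_entropy_bind_disjoint:
  assumes fin: "finite (set_pmf M)"
    and finN: "\<And>a. a \<in> set_pmf M \<Longrightarrow> finite (set_pmf (N a))"
    and disj: "\<And>a b. a \<in> set_pmf M \<Longrightarrow> b \<in> set_pmf M \<Longrightarrow> a \<noteq> b \<Longrightarrow>
      set_pmf (N a) \<inter> set_pmf (N b) = {}"
  shows "shannon_entropy (bind_pmf M N)
    = shannon_entropy M + (\<Sum>a\<in>set_pmf M. pmf M a * shannon_entropy (N a))"
proof -
  let ?B = "bind_pmf M N"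
  have "shannon_entropy ?B = - (\<Sum>a\<in>set_pmf M. \<Sum>w\<in>set_pmf (N a). pmf ?B w * ln (pmf ?B w))"
    by (simp add: shannon_entropy_def sum.UNION_disjoint fin finN disj)
  also have "\<dots> = - (\<Sum>a\<in>set_pmf M. \<Sum>w\<in>set_pmf (N a).
      pmf M a * pmf (N a) w * (ln (pmf M a) + ln (pmf (N a) w)))"
  proof (intro arg_cong[where f=uminus] sum.cong refl)
    fix a w assume a: "a \<in> set_pmf M" and w: "w \<in> set_pmf (N a)"
    show "pmf ?B w * ln (pmf ?B w) = pmf M a * pmf (N a) w * (ln (pmf M a) + ln (pmf (N a) w))"
      using pmf_positive[OF a] pmf_positive[OF w]
      by (simp add: pmf_bind_disjoint[of M N, OF fin disj a w] ln_mult)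
  qed
  also have "\<dots> = - (\<Sum>a\<in>set_pmf M. pmf M a * ln (pmf M a) * (\<Sum>w\<in>set_pmf (N a). pmf (N a) w)
      + pmf M a * (\<Sum>w\<in>set_pmf (N a). pmf (N a) w * ln (pmf (N a) w)))"
    by (intro arg_cong[where f=uminus] sum.cong refl)
       (simp add: sum_distrib_left sum_distrib_right sum.distrib algebra_simps)
  also have "\<dots> = shannon_entropy M + (\<Sum>a\<in>set_pmf M. pmf M a * shannon_entropy (N a))"
    by (simp add: shannon_entropy_def sum.distrib sum_negf sum_pmf_eq_1 finN)
  finally show ?thesis .
qed

lemma finite_set_Pi_pmf:
  assumes "finite J" "\<And>x. x \<in> J \<Longrightarrow> finite (set_pmf (p x))"
  shows "finite (set_pmf (Pi_pmf J dflt p))"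
  by (rule finite_subset[OF set_Pi_pmf_subset' finite_PiE_dflt]) (use assms in auto)

lemma shannon_entropy_Pi_pmf_const:
  assumes "finite J" "finite (set_pmf P)"
  shows "shannon_entropy (Pi_pmf J dflt (\<lambda>_. P)) = card J * shannon_entropy P"
  using assms(1)
proof (induction J rule: finite_induct)
  case empty
  then show ?case by simp
next
  case (insert x J)
  let ?Q = "Pi_pmf J dflt (\<lambda>_. P)"
  have finQ: "finite (set_pmf ?Q)"
    by (rule finite_set_Pi_pmf) (use insert assms in auto)
  have Q_dflt: "f x = dflt" if "f \<in> set_pmf ?Q" for f
    using set_Pi_pmf_subset[OF insert(1), of dflt "\<lambda>_. P"] insert(2) that by blast
  have inj: "inj_on (\<lambda>f. f(x := y)) (set_pmf ?Q)" for y
    by (rule inj_onI) (metis Q_dflt fun_upd_idem fun_upd_upd)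
  have "Pi_pmf (insert x J) dflt (\<lambda>_. P) = bind_pmf P (\<lambda>y. map_pmf (\<lambda>f. f(x:=y)) ?Q)"
    by (subst Pi_pmf_insert'[OF insert(1,2)]) (simp add: map_pmf_def)
  also have "shannon_entropy \<dots>
      = shannon_entropy P + (\<Sum>y\<in>set_pmf P. pmf P y * shannon_entropy (map_pmf (\<lambda>f. f(x:=y)) ?Q))"
    by (rule shannon_entropy_bind_disjoint[OF assms(2)])
       (use finQ in \<open>auto dest: fun_cong[where x=x]\<close>)
  also have "\<dots> = shannon_entropy P + shannon_entropy ?Q"
    by (simp add: shannon_entropy_map_inj[OF inj] sum_distrib_right[symmetric] sum_pmf_eq_1 assms(2))
  finally show ?case using insert by (simp add: algebra_simps)
qed

section \<open>The example as a parity extension of fair coins\<close>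

abbreviation iid_bits :: "real \<Rightarrow> nat set \<Rightarrow> (nat \<Rightarrow> bool) pmf" where
  "iid_bits q A \<equiv> Pi_pmf A False (\<lambda>_. bernoulli_pmf q)"

lemma iid_bits_outside:
  "finite A \<Longrightarrow> m \<in> set_pmf (iid_bits q A) \<Longrightarrow> x \<notin> A \<Longrightarrow> \<not> m x"
  using set_Pi_pmf_subset[of A False "\<lambda>_. bernoulli_pmf q"] by auto

lemma finite_set_iid_bits: "finite A \<Longrightarrow> finite (set_pmf (iid_bits q A))"
  by (rule finite_set_Pi_pmf) auto

lemma shannon_entropy_iid_bits:
  "finite A \<Longrightarrow> shannon_entropy (iid_bits q A) = card A * shannon_entropy (bernoulli_pmf q)"
  by (rule shannon_entropy_Pi_pmf_const) auto

lemma map_pmf_xor_bernoulli_half: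
  "map_pmf (\<lambda>b. b \<noteq> c) (bernoulli_pmf (1/2)) = bernoulli_pmf (1/2)"
proof (rule pmf_eqI)
  fix x :: bool
  have "inj (\<lambda>b::bool. b \<noteq> c)" by (auto simp: inj_def)
  have "x = ((x \<noteq> c) \<noteq> c)" by auto
  then have "pmf (map_pmf (\<lambda>b. b \<noteq> c) (bernoulli_pmf (1/2))) x
      = pmf (map_pmf (\<lambda>b. b \<noteq> c) (bernoulli_pmf (1/2))) ((\<lambda>b. b \<noteq> c) (x \<noteq> c))"
    by simp
  also have "\<dots> = pmf (bernoulli_pmf (1/2)) (x \<noteq> c)"
    by (rule pmf_map_inj') fact
  finally show "pmf (map_pmf (\<lambda>b. b \<noteq> c) (bernoulli_pmf (1/2))) x = pmf (bernoulli_pmf (1/2)) x"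
    by simp
qed

definition parity_extend :: "nat set \<Rightarrow> nat set \<Rightarrow> (nat \<Rightarrow> bool) \<Rightarrow> nat \<Rightarrow> bool" where
  "parity_extend I0 I1 v = (\<lambda>i. if i \<in> I0 then odd (card {j\<in>I1. v j}) else v i)"

lemma odd_card_fun_upd:
  assumes "finite I" "k \<in> I" "\<not> z k"
  shows "odd (card {j\<in>I. (z(k:=y)) j}) = (y \<noteq> odd (card {j\<in>I-{k}. z j}))"
proof -
  have "{j\<in>I. (z(k:=y)) j} = (if y then insert k {j\<in>I-{k}. z j} else {j\<in>I-{k}. z j})"
    using assms by auto
  then show ?thesis using assms(1) by auto
qed

text \<open>The bit b equals the parity of all of x^I1, so the law of x is that of i.i.d. fair bits on
  I1 extended by their parity to I0; in particular it does not depend on istar.\<close>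

lemma p_ex_eq_map_parity_extend:
  assumes fin: "finite I1" and k: "k \<in> I1" "k \<notin> I0"
  shows "p_ex I0 I1 k = map_pmf (parity_extend I0 I1) (iid_bits (1/2) I1)"
proof -
  let ?P = "iid_bits (1/2) (I1 - {k})"
  have I1_eq: "I1 = insert k (I1 - {k})" using k by auto
  have "map_pmf (parity_extend I0 I1) (iid_bits (1/2) I1)
      = bind_pmf (bernoulli_pmf (1/2)) (\<lambda>y. bind_pmf ?P
          (\<lambda>f. return_pmf (parity_extend I0 I1 (f(k:=y)))))"
    by (subst I1_eq, subst Pi_pmf_insert') (use fin in \<open>auto simp: map_bind_pmf\<close>)
  also have "\<dots> = bind_pmf ?P (\<lambda>z. bind_pmf (bernoulli_pmf (1/2))
      (\<lambda>y. return_pmf (parity_extend I0 I1 (z(k:=y)))))"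
    by (rule bind_commute_pmf)
  also have "\<dots> = bind_pmf ?P (\<lambda>z. bind_pmf (bernoulli_pmf (1/2)) (\<lambda>b. return_pmf
      (\<lambda>i. if i \<in> I0 then b else if i = k then (b \<noteq> odd (card {j \<in> I1 - {k}. z j})) else z i)))"
  proof (rule bind_pmf_cong[OF refl])
    fix z assume "z \<in> set_pmf ?P"
    then have zk: "\<not> z k" using fin by (intro iid_bits_outside) auto
    define c where "c = odd (card {j \<in> I1 - {k}. z j})"
    have "bind_pmf (bernoulli_pmf (1/2)) (\<lambda>y. return_pmf (parity_extend I0 I1 (z(k:=y))))
        = map_pmf (\<lambda>y. parity_extend I0 I1 (z(k:=y))) (map_pmf (\<lambda>b. b \<noteq> c) (bernoulli_pmf (1/2)))"
      by (subst map_pmf_xor_bernoulli_half) (simp add: map_pmf_def)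
    also have "\<dots> = map_pmf (\<lambda>b. parity_extend I0 I1 (z(k := (b \<noteq> c)))) (bernoulli_pmf (1/2))"
      by (simp add: map_pmf_comp)
    also have "(\<lambda>b. parity_extend I0 I1 (z(k := (b \<noteq> c))))
        = (\<lambda>b i. if i \<in> I0 then b else if i = k then (b \<noteq> c) else z i)"
      using odd_card_fun_upd[of I1 k z, OF fin k(1) zk] k(2)
      by (auto simp: parity_extend_def c_def fun_eq_iff)
    finally show "bind_pmf (bernoulli_pmf (1/2)) (\<lambda>y. return_pmf (parity_extend I0 I1 (z(k:=y))))
      = bind_pmf (bernoulli_pmf (1/2)) (\<lambda>b. return_pmf
          (\<lambda>i. if i \<in> I0 then b else if i = k then (b \<noteq> odd (card {j \<in> I1 - {k}. z j})) else z i))"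
      unfolding map_pmf_def c_def .
  qed
  also have "\<dots> = p_ex I0 I1 k"
    unfolding p_ex_def by (rule bind_commute_pmf[symmetric])
  finally show ?thesis ..
qed

lemma finite_set_p_ex:
  assumes "finite I1" "I0 \<inter> I1 = {}" "istar \<in> I1"
  shows "finite (set_pmf (p_ex I0 I1 istar))"
  using assms by (subst p_ex_eq_map_parity_extend) (auto simp: finite_set_iid_bits)

section \<open>Entropies of sub-vectors of the example\<close>

text \<open>The rank over GF(2) of the linear forms x^i, i in S, when x^I0 is the parity of x^I1.\<close>

definition p_ex_rank :: "nat set \<Rightarrow> nat set \<Rightarrow> nat set \<Rightarrow> nat" where
  "p_ex_rank I0 I1 S = min (card I1) (card (S \<inter> I1) + of_bool (S \<inter> I0 \<noteq> {}))"

lemma marg_map_pmf: "marg S (map_pmf f p) = map_pmf (\<lambda>v. restrict (f v) S) p"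
  by (simp add: marg_def map_pmf_comp)

lemma ent_p_ex_if_I1_subset:
  assumes fin: "finite I1" and dis: "I0 \<inter> I1 = {}" and k: "k \<in> I1" and S: "I1 \<subseteq> S"
  shows "ent S (p_ex I0 I1 k) = card I1 * ln 2"
proof -
  have "ent S (p_ex I0 I1 k)
      = shannon_entropy (map_pmf (\<lambda>v. restrict (parity_extend I0 I1 v) S) (iid_bits (1/2) I1))"
  proof -
    have "k \<notin> I0" using dis k by auto
    then show ?thesis by (simp add: ent_def p_ex_eq_map_parity_extend[OF fin k] marg_map_pmf)
  qed
  also have "\<dots> = shannon_entropy (iid_bits (1/2) I1)"
  proof (rule shannon_entropy_map_inj, rule inj_onI, rule ext)
    fix v w x assume v: "v \<in> set_pmf (iid_bits (1/2) I1)" and w: "w \<in> set_pmf (iid_bits (1/2) I1)"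
      and e: "restrict (parity_extend I0 I1 v) S = restrict (parity_extend I0 I1 w) S"
    show "v x = w x"
    proof (cases "x \<in> I1")
      case True
      then have "x \<in> S" "x \<notin> I0" using S dis by auto
      then show ?thesis using fun_cong[OF e, of x] by (simp add: parity_extend_def)
    qed (use iid_bits_outside[OF fin v] iid_bits_outside[OF fin w] in auto)
  qed
  also have "\<dots> = card I1 * ln 2"
    by (simp add: shannon_entropy_iid_bits fin shannon_entropy_bernoulli_half)
  finally show ?thesis .
qed

text \<open>If a coordinate k of I1 is outside S, it may play the role of istar; then x^S is an
  injective image of the i.i.d. bits on S \<inter> I1, plus the bit x^k if S meets I0.\<close>

lemma marg_p_ex_if_notin:
  assumes fin: "finite I1" and k: "k \<in> I1" "k \<notin> S"
  shows "marg S (p_ex I0 I1 k)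
    = map_pmf (\<lambda>v. restrict (\<lambda>i. if i \<in> I0 then v k else v i) S) (iid_bits (1/2) I1)"
proof -
  have I1_eq: "I1 = insert k (I1 - {k})" using k by auto
  have "map_pmf (\<lambda>v. restrict (\<lambda>i. if i \<in> I0 then v k else v i) S) (iid_bits (1/2) I1)
      = bind_pmf (bernoulli_pmf (1/2)) (\<lambda>b. bind_pmf (iid_bits (1/2) (I1 - {k})) (\<lambda>z. return_pmf
          (restrict (\<lambda>i. if i \<in> I0 then (z(k:=b)) k else (z(k:=b)) i) S)))"
    by (subst I1_eq, subst Pi_pmf_insert') (use fin in \<open>auto simp: map_bind_pmf\<close>)
  also have "\<dots> = marg S (p_ex I0 I1 k)"
    unfolding p_ex_def marg_def map_bind_pmf map_return_pmf
    by (intro bind_pmf_cong refl arg_cong[where f=return_pmf])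
       (use k in \<open>auto simp: fun_eq_iff restrict_def\<close>)
  finally show ?thesis ..
qed

lemma ent_p_ex_if_notin:
  assumes fin: "finite I1" and dis: "I0 \<inter> I1 = {}" and k: "k \<in> I1" "k \<notin> S"
    and S: "S \<subseteq> I0 \<union> I1"
  shows "ent S (p_ex I0 I1 k) = (card (S \<inter> I1) + of_bool (S \<inter> I0 \<noteq> {})) * ln 2"
proof -
  define J where "J = S \<inter> I1 \<union> (if S \<inter> I0 = {} then {} else {k})"
  define G where "G = (\<lambda>v::nat\<Rightarrow>bool. restrict (\<lambda>i. if i \<in> I0 then v k else v i) S)"
  have J: "J \<subseteq> I1" using k by (auto simp: J_def)
  have finJ: "finite J" using J fin finite_subset by blast
  have "ent S (p_ex I0 I1 k) = shannon_entropy (map_pmf G (iid_bits (1/2) I1))"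
    unfolding ent_def marg_p_ex_if_notin[OF fin k] G_def ..
  also have "map_pmf G (iid_bits (1/2) I1)
      = map_pmf G (map_pmf (\<lambda>f x. if x \<in> J then f x else False) (iid_bits (1/2) I1))"
    unfolding map_pmf_comp
    by (intro map_pmf_cong refl) (use S in \<open>auto simp: G_def J_def restrict_def fun_eq_iff\<close>)
  also have "\<dots> = map_pmf G (iid_bits (1/2) J)"
    by (simp add: Pi_pmf_subset[OF fin J])
  also have "shannon_entropy \<dots> = shannon_entropy (iid_bits (1/2) J)"
  proof (rule shannon_entropy_map_inj, rule inj_onI, rule ext)
    fix v w x assume v: "v \<in> set_pmf (iid_bits (1/2) J)" and w: "w \<in> set_pmf (iid_bits (1/2) J)"
      and e: "G v = G w"
    show "v x = w x"
    proof (cases "x \<in> J")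
      case True
      show ?thesis
      proof (cases "x \<in> S \<inter> I1")
        case True
        moreover have "x \<notin> I0" using True dis by auto
        ultimately show ?thesis using fun_cong[OF e, of x] by (simp add: G_def)
      next
        case False
        with \<open>x \<in> J\<close> obtain i0 where "i0 \<in> S" "i0 \<in> I0" "x = k"
          by (auto simp: J_def split: if_splits)
        then show ?thesis using fun_cong[OF e, of i0] by (simp add: G_def)
      qed
    qed (use iid_bits_outside[OF finJ v] iid_bits_outside[OF finJ w] in auto)
  qed
  also have "\<dots> = card J * ln 2"
    by (simp add: shannon_entropy_iid_bits finJ shannon_entropy_bernoulli_half)
  also have "card J = card (S \<inter> I1) + of_bool (S \<inter> I0 \<noteq> {})"
    using k fin by (auto simp: J_def)
  finally show ?thesis .
qed

lemma ent_p_ex: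
  assumes fin: "finite I1" and dis: "I0 \<inter> I1 = {}" and istar: "istar \<in> I1"
    and S: "S \<subseteq> I0 \<union> I1"
  shows "ent S (p_ex I0 I1 istar) = p_ex_rank I0 I1 S * ln 2"
proof (cases "I1 \<subseteq> S")
  case True
  then show ?thesis
    using ent_p_ex_if_I1_subset[OF fin dis istar True] by (simp add: p_ex_rank_def Int_absorb1)
next
  case False
  then obtain k where k: "k \<in> I1" "k \<notin> S" by auto
  have "istar \<notin> I0" "k \<notin> I0" using dis istar k by auto
  then have "p_ex I0 I1 istar = p_ex I0 I1 k"
    by (simp add: p_ex_eq_map_parity_extend[OF fin istar] p_ex_eq_map_parity_extend[OF fin k(1)])
  moreover have "card (S \<inter> I1) < card I1"
    using k fin by (intro psubset_card_mono) auto
  ultimately show ?thesis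
    using ent_p_ex_if_notin[OF fin dis k S] by (simp add: p_ex_rank_def)
qed

section \<open>Total correlation and dual total correlation\<close>

locale p_ex_setting =
  fixes d :: nat and I0 I1 :: "nat set" and istar :: nat
  assumes cover: "I0 \<union> I1 = {..<d}" and disjoint: "I0 \<inter> I1 = {}" and istar: "istar \<in> I1"
begin

lemma finite_I0: "finite I0" and finite_I1: "finite I1"
  using cover by (metis finite_Un finite_lessThan)+

lemma card_I0_I1: "card I0 + card I1 = d"
  using card_Un_disjoint[OF finite_I0 finite_I1 disjoint] cover by simp

lemma ent_p_ex_rank:
  "S \<subseteq> {..<d} \<Longrightarrow> ent S (p_ex I0 I1 istar) = p_ex_rank I0 I1 S * ln 2"
  using ent_p_ex[OF finite_I1 disjoint istar] cover by simp

lemma ent_all_p_ex: "ent {..<d} (p_ex I0 I1 istar) = card I1 * ln 2"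
proof -
  have "{..<d} \<inter> I1 = I1" using cover by blast
  then show ?thesis using ent_p_ex_rank by (simp add: p_ex_rank_def)
qed

lemma total_corr_p_ex: "total_corr d (p_ex I0 I1 istar) = card I0 * ln 2"
proof -
  have "card I1 \<ge> 1"
    using istar finite_I1 by (metis One_nat_def Suc_leI card_gt_0_iff empty_iff)
  then have "p_ex_rank I0 I1 {i} = 1" if "i < d" for i
    using that cover disjoint by (cases "i \<in> I1") (auto simp: p_ex_rank_def)
  then have "ent {i} (p_ex I0 I1 istar) = ln 2" if "i < d" for i
    using that ent_p_ex_rank[of "{i}"] by simp
  moreover have "real d = card I0 + card I1" using card_I0_I1 by simp
  ultimately show ?thesis
    using ent_all_p_ex by (simp add: total_corr_def algebra_simps)
qed

lemma dual_total_corr_p_ex: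
  assumes "I0 \<noteq> {}"
  shows "dual_total_corr d (p_ex I0 I1 istar) = card I1 * ln 2"
proof -
  have "p_ex_rank I0 I1 ({..<d} - {i}) = card I1" if "i < d" for i
  proof (cases "i \<in> I1")
    case True
    then have "({..<d} - {i}) \<inter> I1 = I1 - {i}" "({..<d} - {i}) \<inter> I0 \<noteq> {}"
      using assms cover disjoint by blast+
    then show ?thesis
      using True finite_I1 by (simp add: p_ex_rank_def)
  next
    case False
    then have "({..<d} - {i}) \<inter> I1 = I1" using cover by blast
    then show ?thesis by (simp add: p_ex_rank_def)
  qed
  then have "cond_ent {i} ({..<d} - {i}) (p_ex I0 I1 istar) = 0" if "i < d" for i
    using that ent_p_ex_rank[of "{..<d} - {i}"] ent_all_p_ex
    by (simp add: cond_ent_def insert_absorb)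
  then show ?thesis
    using ent_all_p_ex by (simp add: dual_total_corr_def)
qed

end

section \<open>Entropies under masking\<close>

text \<open>Here m i means that coordinate i is masked, which happens independently with probability q
  (q = 1 - exp (- t) at time t); so A - {j. m j} is the random set of unmasked coordinates.\<close>

definition avg_unmasked :: "real \<Rightarrow> nat set \<Rightarrow> (nat set \<Rightarrow> real) \<Rightarrow> real" where
  "avg_unmasked q A \<phi> = (\<Sum>m\<in>set_pmf (iid_bits q A). pmf (iid_bits q A) m * \<phi> (A - {j. m j}))"

lemma marg_noised:
  assumes A: "A \<subseteq> {..<d}"
  shows "marg A (noised d t p) =
    bind_pmf (iid_bits (1 - exp (- t)) A) (\<lambda>m. map_pmf (\<lambda>x. restrict (mask m x) A) p)"
proof -
  let ?M = "iid_bits (1 - exp (- t)) {..<d}"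
  have "marg A (noised d t p)
      = bind_pmf ?M (\<lambda>m. bind_pmf p (\<lambda>x. return_pmf (restrict (mask m x) A)))"
    unfolding marg_def noised_def map_bind_pmf map_return_pmf by (rule bind_commute_pmf)
  also have "\<dots> = bind_pmf (map_pmf (\<lambda>f x. if x \<in> A then f x else False) ?M)
      (\<lambda>m. map_pmf (\<lambda>x. restrict (mask m x) A) p)"
    unfolding bind_map_pmf
  proof (rule bind_pmf_cong[OF refl])
    fix m :: "nat \<Rightarrow> bool"
    show "bind_pmf p (\<lambda>x. return_pmf (restrict (mask m x) A)) =
      map_pmf (\<lambda>x. restrict (mask (\<lambda>x. if x \<in> A then m x else False) x) A) p"
      unfolding map_pmf_def
      by (intro bind_pmf_cong refl arg_cong[where f=return_pmf])
         (auto simp: restrict_def mask_def fun_eq_iff)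
  qed
  also have "map_pmf (\<lambda>f x. if x \<in> A then f x else False) ?M = iid_bits (1 - exp (- t)) A"
    by (rule Pi_pmf_subset[symmetric]) (use A in auto)
  finally show ?thesis .
qed

lemma shannon_entropy_restrict_mask:
  fixes p :: "(nat \<Rightarrow> 'a) pmf"
  shows "shannon_entropy (map_pmf (\<lambda>x. restrict (mask m x) A) p) = ent (A - {j. m j}) p"
proof -
  define g where "g = (\<lambda>y::nat \<Rightarrow> 'a. restrict (\<lambda>i. if m i then None else Some (y i)) A)"
  have "map_pmf (\<lambda>x. restrict (mask m x) A) p = map_pmf g (marg (A - {j. m j}) p)"
    unfolding marg_def map_pmf_comp
    by (intro map_pmf_cong refl) (auto simp: g_def mask_def restrict_def fun_eq_iff)
  also have "shannon_entropy \<dots> = ent (A - {j. m j}) p"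
    unfolding ent_def
  proof (rule shannon_entropy_map_inj, rule inj_onI, rule ext)
    fix y y' i assume "y \<in> set_pmf (marg (A - {j. m j}) p)" "y' \<in> set_pmf (marg (A - {j. m j}) p)"
      and e: "g y = g y'"
    then obtain x x' where "y = restrict x (A - {j. m j})" "y' = restrict x' (A - {j. m j})"
      by (auto simp: marg_def)
    then show "y i = y' i"
      using fun_cong[OF e, of i] by (cases "i \<in> A - {j. m j}") (auto simp: g_def)
  qed
  finally show ?thesis .
qed

text \<open>Different masks are visible in the noised vector, so the chain rule splits off the entropy
  of the mask.\<close>

lemma ent_noised:
  assumes A: "A \<subseteq> {..<d}" and finp: "finite (set_pmf p)"
  shows "ent A (noised d t p) = shannon_entropy (iid_bits (1 - exp (- t)) A)
    + avg_unmasked (1 - exp (- t)) A (\<lambda>U. ent U p)"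
proof -
  let ?M = "iid_bits (1 - exp (- t)) A"
  have finA: "finite A" using A finite_subset by blast
  have "ent A (noised d t p) = shannon_entropy ?M
      + (\<Sum>m\<in>set_pmf ?M. pmf ?M m * shannon_entropy (map_pmf (\<lambda>x. restrict (mask m x) A) p))"
    unfolding ent_def marg_noised[OF A]
  proof (rule shannon_entropy_bind_disjoint[OF finite_set_iid_bits[OF finA]])
    fix m m' assume m: "m \<in> set_pmf ?M" and m': "m' \<in> set_pmf ?M" and "m \<noteq> m'"
    then obtain i where i: "m i \<noteq> m' i" by auto
    then have "i \<in> A" using iid_bits_outside[OF finA m] iid_bits_outside[OF finA m'] by auto
    then have "restrict (mask m x) A \<noteq> restrict (mask m' x') A" for x x'
      using i by (auto simp: mask_def dest!: fun_cong[where x=i])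
    then show "set_pmf (map_pmf (\<lambda>x. restrict (mask m x) A) p)
        \<inter> set_pmf (map_pmf (\<lambda>x. restrict (mask m' x) A) p) = {}"
      by auto
  qed (use finp in simp)
  then show ?thesis by (simp add: shannon_entropy_restrict_mask avg_unmasked_def)
qed

lemma avg_unmasked_empty: "avg_unmasked q {} \<phi> = \<phi> {}"
  by (simp add: avg_unmasked_def)

lemma avg_unmasked_insert:
  assumes finA: "finite A" and i: "i \<notin> A" and q: "0 < q" "q < 1"
  shows "avg_unmasked q (insert i A) \<phi>
    = avg_unmasked q A (\<lambda>U. q * \<phi> U + (1 - q) * \<phi> (insert i U))"
proof -
  let ?f = "\<lambda>(y::bool, g::nat\<Rightarrow>bool). g(i:=y)"
  let ?M = "pair_pmf (bernoulli_pmf q) (iid_bits q A)"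
  have inj: "inj_on ?f (set_pmf ?M)"
  proof (rule inj_onI)
    fix a b assume "a \<in> set_pmf ?M" "b \<in> set_pmf ?M" and e: "?f a = ?f b"
    moreover obtain y g y' g' where ab: "a = (y, g)" "b = (y', g')" by fastforce
    ultimately have gi: "\<not> g i" "\<not> g' i" and e: "g(i := y) = g'(i := y')"
      using iid_bits_outside[OF finA] i by auto
    have "g = g'"
    proof
      fix x show "g x = g' x" using fun_cong[OF e, of x] gi by (cases "x = i") auto
    qed
    then show "a = b" using ab fun_cong[OF e, of i] by simp
  qed
  have "avg_unmasked q (insert i A) \<phi>
      = (\<Sum>x\<in>set_pmf (map_pmf ?f ?M). pmf (map_pmf ?f ?M) x * \<phi> (insert i A - {j. x j}))"
    unfolding avg_unmasked_def Pi_pmf_insert[OF finA i] ..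
  also have "\<dots> = (\<Sum>x\<in>set_pmf ?M. pmf ?M x * \<phi> (insert i A - {j. ?f x j}))"
    using inj by (simp add: sum.reindex pmf_map_inj)
  also have "\<dots> = (\<Sum>y\<in>UNIV. \<Sum>g\<in>set_pmf (iid_bits q A).
      pmf (bernoulli_pmf q) y * pmf (iid_bits q A) g * \<phi> (insert i A - {j. (g(i:=y)) j}))"
    using q unfolding sum.cartesian_product set_pair_pmf
    by (intro sum.cong refl) (auto simp: pmf_pair fun_upd_def split: prod.splits)
  also have "\<dots> = (\<Sum>g\<in>set_pmf (iid_bits q A). q * (pmf (iid_bits q A) g * \<phi> (A - {j. g j}))
      + (1 - q) * (pmf (iid_bits q A) g * \<phi> (insert i (A - {j. g j}))))"
  proof -
    have "insert i A - {j. (g(i:=True)) j} = A - {j. g j}"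
      "insert i A - {j. (g(i:=False)) j} = insert i (A - {j. g j})" for g
      using i by auto
    then show ?thesis
      using q by (simp add: UNIV_bool sum.distrib[symmetric] algebra_simps)
  qed
  also have "\<dots> = avg_unmasked q A (\<lambda>U. q * \<phi> U + (1 - q) * \<phi> (insert i U))"
    unfolding avg_unmasked_def by (intro sum.cong refl) (simp add: algebra_simps)
  finally show ?thesis .
qed

lemma avg_unmasked_add_cmult:
  "avg_unmasked q A (\<lambda>U. a * \<phi> U + b * \<psi> U) = a * avg_unmasked q A \<phi> + b * avg_unmasked q A \<psi>"
  by (simp add: avg_unmasked_def sum.distrib sum_distrib_left algebra_simps)

lemma avg_unmasked_diff:
  "avg_unmasked q A (\<lambda>U. \<phi> U - \<psi> U) = avg_unmasked q A \<phi> - avg_unmasked q A \<psi>"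
  by (simp add: avg_unmasked_def sum_subtractf algebra_simps)

lemma avg_unmasked_add:
  "avg_unmasked q A (\<lambda>U. \<phi> U + \<psi> U) = avg_unmasked q A \<phi> + avg_unmasked q A \<psi>"
  by (simp add: avg_unmasked_def sum.distrib algebra_simps)

lemma avg_unmasked_cmult: "avg_unmasked q A (\<lambda>U. a * \<phi> U) = a * avg_unmasked q A \<phi>"
  by (simp add: avg_unmasked_def sum_distrib_left algebra_simps)

lemma avg_unmasked_mono:
  assumes "finite A" "\<And>U. U \<subseteq> A \<Longrightarrow> \<phi> U \<le> \<psi> U"
  shows "avg_unmasked q A \<phi> \<le> avg_unmasked q A \<psi>"
  unfolding avg_unmasked_def by (intro sum_mono mult_left_mono) (use assms in auto)

lemma avg_unmasked_cong:
  assumes "\<And>U. U \<subseteq> A \<Longrightarrow> \<phi> U = \<psi> U"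
  shows "avg_unmasked q A \<phi> = avg_unmasked q A \<psi>"
  unfolding avg_unmasked_def by (intro sum.cong refl) (use assms in auto)

lemma avg_unmasked_disjoint:
  assumes "finite A" and q: "0 < q" "q < 1"
  shows "avg_unmasked q A (\<lambda>U. of_bool (U \<inter> L = {})) = q ^ card (A \<inter> L)"
  using assms(1)
proof (induction A rule: finite_induct)
  case empty
  then show ?case by (simp add: avg_unmasked_empty)
next
  case (insert i A)
  show ?case
  proof (cases "i \<in> L")
    case True
    then have "avg_unmasked q (insert i A) (\<lambda>U. of_bool (U \<inter> L = {}))
        = avg_unmasked q A (\<lambda>U. q * of_bool (U \<inter> L = {}))"
      by (simp add: avg_unmasked_insert[OF insert(1,2) q])
    then show ?thesis
      using True insert by (simp add: avg_unmasked_cmult)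
  next
    case False
    then have "avg_unmasked q (insert i A) (\<lambda>U. of_bool (U \<inter> L = {}))
        = avg_unmasked q A (\<lambda>U. of_bool (U \<inter> L = {}))"
      by (simp add: avg_unmasked_insert[OF insert(1,2) q] algebra_simps)
    then show ?thesis
      using False insert by simp
  qed
qed

lemma avg_unmasked_superset:
  assumes "finite A" and q: "0 < q" "q < 1" and "finite L"
  shows "avg_unmasked q A (\<lambda>U. of_bool (L \<subseteq> U)) = of_bool (L \<subseteq> A) * (1 - q) ^ card L"
  using assms(1,4)
proof (induction A arbitrary: L rule: finite_induct)
  case empty
  then show ?case by (simp add: avg_unmasked_empty)
next
  case (insert i A)
  show ?case
  proof (cases "i \<in> L")
    case True
    have "avg_unmasked q (insert i A) (\<lambda>U. of_bool (L \<subseteq> U))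
        = avg_unmasked q A (\<lambda>U. q * of_bool (L \<subseteq> U) + (1 - q) * of_bool (L - {i} \<subseteq> U))"
      unfolding avg_unmasked_insert[OF insert(1,2) q]
      by (rule avg_unmasked_cong) (use True in auto)
    also have "\<dots> = q * (of_bool (L \<subseteq> A) * (1 - q) ^ card L)
        + (1 - q) * (of_bool (L - {i} \<subseteq> A) * (1 - q) ^ card (L - {i}))"
      using insert by (simp add: avg_unmasked_add_cmult)
    also have "\<dots> = of_bool (L \<subseteq> insert i A) * (1 - q) ^ card L"
    proof -
      have "\<not> L \<subseteq> A" "(L - {i} \<subseteq> A) = (L \<subseteq> insert i A)" using True insert(2) by auto
      moreover have "card L = Suc (card (L - {i}))" using True insert(4) by (metis card_Suc_Diff1)
      ultimately show ?thesis by simp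
    qed
    finally show ?thesis .
  next
    case False
    have "avg_unmasked q (insert i A) (\<lambda>U. of_bool (L \<subseteq> U))
        = avg_unmasked q A (\<lambda>U. q * of_bool (L \<subseteq> U) + (1 - q) * of_bool (L \<subseteq> U))"
      unfolding avg_unmasked_insert[OF insert(1,2) q]
      by (rule avg_unmasked_cong) (use False in auto)
    also have "\<dots> = of_bool (L \<subseteq> insert i A) * (1 - q) ^ card L"
      using insert False by (simp add: avg_unmasked_add_cmult subset_insert algebra_simps)
    finally show ?thesis .
  qed
qed

text \<open>Only the configurations in which both i and j are unmasked contribute; hence the factor
  exp (- t)^2 and the second difference of the entropies of the clean distribution.\<close>

lemma cond_mi_noised:
  assumes ij: "i < d" "j < d" "i \<noteq> j" and K: "K = {..<d} - {i, j}"
    and finp: "finite (set_pmf p)" and t: "0 < t"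
  shows "cond_mi i j K (noised d t p) = avg_unmasked (1 - exp (- t)) K (\<lambda>U. (exp (- t))\<^sup>2 *
      (ent (insert i U) p + ent (insert j U) p - ent U p - ent (insert i (insert j U)) p))"
proof -
  define q where "q = 1 - exp (- t)"
  have q: "0 < q" "q < 1" using t by (auto simp: q_def)
  have finK: "finite K" using K by simp
  have notin: "i \<notin> K" "j \<notin> K" "i \<notin> insert j K" using K ij by auto
  let ?e = "\<lambda>U. ent U p" and ?h = "shannon_entropy (bernoulli_pmf q)"
  have E: "ent A (noised d t p) = card A * ?h + avg_unmasked q A ?e" if "A \<subseteq> {..<d}" for A
    using ent_noised[OF that finp, of t] shannon_entropy_iid_bits[OF finite_subset[OF that]]
    by (simp add: q_def)
  have "{i} \<union> ({j} \<union> K) = insert i (insert j K)" "{i} \<union> K = insert i K" "{j} \<union> K = insert j K"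
    by auto
  then have "cond_mi i j K (noised d t p) = (ent (insert i K) (noised d t p) - ent K (noised d t p))
      - (ent (insert i (insert j K)) (noised d t p) - ent (insert j K) (noised d t p))"
    unfolding cond_mi_def cond_ent_def by simp
  also have "\<dots> = (avg_unmasked q (insert i K) ?e - avg_unmasked q K ?e)
      - (avg_unmasked q (insert i (insert j K)) ?e - avg_unmasked q (insert j K) ?e)"
    using K ij finK notin by (simp add: E algebra_simps)
  also have "\<dots> = avg_unmasked q K (\<lambda>U. (q * ?e U + (1 - q) * ?e (insert i U) - ?e U)
      - (q * (q * ?e U + (1 - q) * ?e (insert i U))
         + (1 - q) * (q * ?e (insert j U) + (1 - q) * ?e (insert i (insert j U)))
         - (q * ?e U + (1 - q) * ?e (insert j U))))"
    unfolding avg_unmasked_insert[OF finK notin(1) q] avg_unmasked_insert[OF finK notin(2) q]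
      avg_unmasked_insert[OF finite.insertI[OF finK] notin(3) q] avg_unmasked_diff
    by (simp only: avg_unmasked_insert[OF finK notin(2) q])
  also have "\<dots> = avg_unmasked q K (\<lambda>U. (1 - q)\<^sup>2 *
      (?e (insert i U) + ?e (insert j U) - ?e U - ?e (insert i (insert j U))))"
    by (intro avg_unmasked_cong) (simp add: power2_eq_square algebra_simps)
  finally show ?thesis by (simp add: q_def)
qed

section \<open>The effective total correlation of the example\<close>

lemma card_insert_Int:
  assumes "finite B" "i \<notin> U"
  shows "card (insert i U \<inter> B) = card (U \<inter> B) + of_bool (i \<in> B)"
proof (cases "i \<in> B")
  case True
  then have "insert i U \<inter> B = insert i (U \<inter> B)" by auto
  then show ?thesis using True assms by simp
next
  case False
  then have "insert i U \<inter> B = U \<inter> B" by auto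
  then show ?thesis using False by simp
qed

lemma card_Diff_pair_ge: "card A - 2 \<le> card (A - {i, j})"
proof -
  have "card A - card {i, j} \<le> card (A - {i, j})" by (rule diff_card_le_card_Diff) simp
  moreover have "card {i, j} \<le> 2" by (cases "i = j") simp_all
  ultimately show ?thesis by linarith
qed

lemma min_second_difference_le:
  fixes m a :: nat
  assumes "a + of_bool bi + of_bool bj \<le> m"
  shows "real (min m (a + of_bool bi + of_bool (e \<or> \<not> bi)))
    + real (min m (a + of_bool bj + of_bool (e \<or> \<not> bj)))
    - real (min m (a + of_bool e)) - real (min m (a + of_bool bi + of_bool bj + of_bool (e \<or> \<not> bi \<or> \<not> bj)))
    \<le> of_bool (\<not> e) + of_bool (m \<le> a + of_bool bi + of_bool bj)"
  using assms by (cases e; cases bi; cases bj) (auto simp: min_def)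

context p_ex_setting
begin

lemma p_ex_rank_insert:
  assumes "i < d" "i \<notin> U"
  shows "p_ex_rank I0 I1 (insert i U)
    = min (card I1) (card (U \<inter> I1) + of_bool (i \<in> I1) + of_bool (U \<inter> I0 \<noteq> {} \<or> i \<notin> I1))"
proof -
  have "(insert i U \<inter> I0 = {}) = (U \<inter> I0 = {} \<and> i \<in> I1)" using assms cover disjoint by blast
  then show ?thesis using assms by (simp add: p_ex_rank_def card_insert_Int finite_I1)
qed

text \<open>The second difference of the rank is at most 1 when U misses I0 (then adding i or j may
  bring in the parity bit twice) plus 1 when U already contains I1 - {i, j} (then the two new
  coordinates may saturate the rank).\<close>

lemma p_ex_rank_second_difference_le:
  assumes ij: "i < d" "j < d" "i \<noteq> j" and U: "U \<subseteq> {..<d} - {i, j}"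
  shows "real (p_ex_rank I0 I1 (insert i U)) + real (p_ex_rank I0 I1 (insert j U))
      - real (p_ex_rank I0 I1 U) - real (p_ex_rank I0 I1 (insert i (insert j U)))
    \<le> of_bool (U \<inter> I0 = {}) + of_bool (I1 - {i, j} \<subseteq> U)"
proof -
  let ?a = "card (U \<inter> I1)" and ?e = "U \<inter> I0 \<noteq> {}"
  have notin: "i \<notin> U" "j \<notin> U" "i \<notin> insert j U" using U ij by auto
  have "(insert j U \<inter> I0 \<noteq> {} \<or> i \<notin> I1) = (?e \<or> i \<notin> I1 \<or> j \<notin> I1)"
    using ij cover disjoint by blast
  then have r_ij: "p_ex_rank I0 I1 (insert i (insert j U)) = min (card I1)
      (?a + of_bool (i \<in> I1) + of_bool (j \<in> I1) + of_bool (?e \<or> i \<notin> I1 \<or> j \<notin> I1))"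
    using p_ex_rank_insert[OF ij(1) notin(3)] notin(2)
    by (simp add: card_insert_Int finite_I1 add.assoc)
  have U_I1: "U \<inter> I1 \<subseteq> I1 - {i, j}" using U by auto
  have card_split: "card (I1 - {i, j}) + of_bool (i \<in> I1) + of_bool (j \<in> I1) = card I1"
  proof -
    have "card I1 = card (I1 - {i, j}) + card (I1 \<inter> {i, j})"
      using finite_I1 by (metis Diff_Diff_Int add.commute card_Diff_subset_Int card_mono
          finite_Diff finite_Int inf_le1 le_add_diff_inverse Int_commute)
    moreover have "card (I1 \<inter> {i, j}) = of_bool (i \<in> I1) + of_bool (j \<in> I1)"
      using ij(3) by (cases "i \<in> I1"; cases "j \<in> I1") (auto simp: Int_insert_right)
    ultimately show ?thesis by simp
  qed
  have a_le: "?a \<le> card (I1 - {i, j})" using U_I1 finite_I1 by (intro card_mono) auto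
  have saturated: "I1 - {i, j} \<subseteq> U" if "card I1 \<le> ?a + of_bool (i \<in> I1) + of_bool (j \<in> I1)"
  proof -
    have "U \<inter> I1 = I1 - {i, j}"
      using that card_split a_le U_I1 finite_I1 by (intro card_subset_eq) auto
    then show ?thesis by auto
  qed
  have "real (p_ex_rank I0 I1 (insert i U)) + real (p_ex_rank I0 I1 (insert j U))
      - real (p_ex_rank I0 I1 U) - real (p_ex_rank I0 I1 (insert i (insert j U)))
    \<le> of_bool (\<not> ?e) + of_bool (card I1 \<le> ?a + of_bool (i \<in> I1) + of_bool (j \<in> I1))"
    unfolding p_ex_rank_insert[OF ij(1) notin(1)] p_ex_rank_insert[OF ij(2) notin(2)] r_ij
    by (simp only: p_ex_rank_def, rule min_second_difference_le) (use card_split a_le in linarith)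
  also have "\<dots> \<le> of_bool (U \<inter> I0 = {}) + of_bool (I1 - {i, j} \<subseteq> U)"
    using saturated by auto
  finally show ?thesis .
qed

lemma cond_mi_noised_p_ex_le:
  assumes ij: "i < d" "j < d" "i \<noteq> j" and t: "0 < t"
  shows "cond_mi i j ({..<d} - {i, j}) (noised d t (p_ex I0 I1 istar))
    \<le> (exp (- t))\<^sup>2 * ln 2 * ((1 - exp (- t)) ^ (card I0 - 2) + (exp (- t)) ^ (card I1 - 2))"
proof -
  define K where "K = {..<d} - {i, j}"
  define q where "q = 1 - exp (- t)"
  define s where "s = exp (- t)"
  have q: "0 < q" "q < 1" and s: "s = 1 - q" "0 \<le> s" using t by (auto simp: q_def s_def)
  have finK: "finite K" by (simp add: K_def)
  let ?p = "p_ex I0 I1 istar"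
  have "cond_mi i j K (noised d t ?p) = avg_unmasked q K (\<lambda>U. s\<^sup>2 *
      (ent (insert i U) ?p + ent (insert j U) ?p - ent U ?p - ent (insert i (insert j U)) ?p))"
    unfolding q_def s_def
    by (rule cond_mi_noised[OF ij K_def finite_set_p_ex[OF finite_I1 disjoint istar] t])
  also have "\<dots> \<le> avg_unmasked q K
      (\<lambda>U. s\<^sup>2 * ln 2 * (of_bool (U \<inter> I0 = {}) + of_bool (I1 - {i, j} \<subseteq> U)))"
  proof (rule avg_unmasked_mono[OF finK])
    fix U assume "U \<subseteq> K"
    then have sub: "U \<subseteq> {..<d}" "insert i U \<subseteq> {..<d}" "insert j U \<subseteq> {..<d}"
      "insert i (insert j U) \<subseteq> {..<d}" and U: "U \<subseteq> {..<d} - {i, j}"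
      using ij by (auto simp: K_def)
    have "s\<^sup>2 * (ent (insert i U) ?p + ent (insert j U) ?p - ent U ?p - ent (insert i (insert j U)) ?p)
      = s\<^sup>2 * ln 2 * (real (p_ex_rank I0 I1 (insert i U)) + real (p_ex_rank I0 I1 (insert j U))
          - real (p_ex_rank I0 I1 U) - real (p_ex_rank I0 I1 (insert i (insert j U))))"
      unfolding ent_p_ex_rank[OF sub(1)] ent_p_ex_rank[OF sub(2)] ent_p_ex_rank[OF sub(3)]
        ent_p_ex_rank[OF sub(4)]
      by (simp only: algebra_simps)
    also have "\<dots> \<le> s\<^sup>2 * ln 2 * (of_bool (U \<inter> I0 = {}) + of_bool (I1 - {i, j} \<subseteq> U))"
      by (rule mult_left_mono[OF p_ex_rank_second_difference_le[OF ij U]]) simp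
    finally show "s\<^sup>2 * (ent (insert i U) ?p + ent (insert j U) ?p - ent U ?p
        - ent (insert i (insert j U)) ?p)
      \<le> s\<^sup>2 * ln 2 * (of_bool (U \<inter> I0 = {}) + of_bool (I1 - {i, j} \<subseteq> U))" .
  qed
  also have "\<dots> = s\<^sup>2 * ln 2 * (q ^ card (K \<inter> I0) + of_bool (I1 - {i, j} \<subseteq> K) * s ^ card (I1 - {i, j}))"
    by (simp add: avg_unmasked_cmult avg_unmasked_add avg_unmasked_disjoint[OF finK q]
        avg_unmasked_superset[OF finK q] finite_I1 s)
  also have "\<dots> \<le> s\<^sup>2 * ln 2 * (q ^ (card I0 - 2) + s ^ (card I1 - 2))"
  proof (intro mult_left_mono add_mono)
    have "card I0 - 2 \<le> card (I0 - {i, j})" by (rule card_Diff_pair_ge)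
    also have "\<dots> \<le> card (K \<inter> I0)" using cover finK by (intro card_mono) (auto simp: K_def)
    finally show "q ^ card (K \<inter> I0) \<le> q ^ (card I0 - 2)" using q by (intro power_decreasing) auto
    have "s ^ card (I1 - {i, j}) \<le> s ^ (card I1 - 2)"
      using card_Diff_pair_ge q s by (intro power_decreasing) auto
    then show "of_bool (I1 - {i, j} \<subseteq> K) * s ^ card (I1 - {i, j}) \<le> s ^ (card I1 - 2)"
      using s by auto
  qed simp_all
  finally show ?thesis by (simp add: K_def s_def q_def)
qed

lemma calI_p_ex_le:
  assumes t: "0 < t"
  shows "calI d (p_ex I0 I1 istar) t
    \<le> real d ^ 2 * ((exp (- t))\<^sup>2 * ln 2 * ((1 - exp (- t)) ^ (card I0 - 2) + (exp (- t)) ^ (card I1 - 2)))"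
proof -
  let ?B = "(exp (- t))\<^sup>2 * ln 2 * ((1 - exp (- t)) ^ (card I0 - 2) + (exp (- t)) ^ (card I1 - 2))"
  have "calI d (p_ex I0 I1 istar) t \<le> (\<Sum>i<d. \<Sum>j\<in>{..<d} - {i}. ?B)"
    unfolding calI_def by (intro sum_mono cond_mi_noised_p_ex_le t) auto
  also have "\<dots> = real d * (real d - 1) * ?B"
    by (cases d) simp_all
  also have "\<dots> \<le> real d ^ 2 * ?B"
    using t by (intro mult_right_mono) (auto simp: power2_eq_square intro: mult_left_mono)
  finally show ?thesis .
qed

end


text \<open>Substituting u = 1 - exp (- t), these are the Beta integrals of (1 - u) u^N and
  u (1 - u)^(M - 1) over [0, 1].\<close>

lemma nn_integral_exp_Beta:
  fixes N M :: nat
  assumes M: "M \<ge> 1"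
  shows "(\<integral>\<^sup>+t. ennreal ((exp (- t))\<^sup>2 * (1 - exp (- t)) ^ N + (1 - exp (- t)) * exp (- t) ^ M)
      * indicator {0..} t \<partial>lborel)
    = ennreal (1 / ((N + 1) * (N + 2)) + 1 / (M * (M + 1)))"
proof -
  define f where "f = (\<lambda>t::real. (exp (- t))\<^sup>2 * (1 - exp (- t)) ^ N + (1 - exp (- t)) * exp (- t) ^ M)"
  define F where "F = (\<lambda>t::real. (1 - exp (- t)) ^ (N + 1) / (N + 1) - (1 - exp (- t)) ^ (N + 2) / (N + 2)
      - exp (- t) ^ M / M + exp (- t) ^ (M + 1) / (M + 1))"
  obtain M' where M': "M = Suc M'" using M by (cases M) auto
  have "DERIV F x :> f x" for x
    unfolding F_def f_def M'
    by (rule derivative_eq_intros refl | simp)+ (simp add: power2_eq_square field_simps del: of_nat_Suc)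
  moreover have "(F \<longlongrightarrow> 1 / (N + 1) - 1 / (N + 2)) at_top"
  proof -
    have "((\<lambda>t::real. exp (- t)) \<longlongrightarrow> 0) at_top"
      by (rule filterlim_compose[OF exp_at_bot filterlim_uminus_at_bot_at_top])
    then have "(F \<longlongrightarrow> (1 - 0) ^ (N + 1) / (N + 1) - (1 - 0) ^ (N + 2) / (N + 2)
        - 0 ^ M / M + 0 ^ (M + 1) / (M + 1)) at_top"
      unfolding F_def by (intro tendsto_intros) (use M in auto)
    then show ?thesis using M' by simp
  qed
  moreover have "f \<in> borel_measurable borel"
    unfolding f_def by (intro borel_measurable_continuous_onI continuous_intros)
  moreover have "0 \<le> f x" if "0 \<le> x" for x
    unfolding f_def using that by (intro add_nonneg_nonneg mult_nonneg_nonneg zero_le_power) auto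
  ultimately have "(\<integral>\<^sup>+t. ennreal (f t) * indicator {0..} t \<partial>lborel)
      = ennreal (1 / (N + 1) - 1 / (N + 2) - F 0)"
    by (intro nn_integral_FTC_atLeast)
  also have "1 / (N + 1) - 1 / (N + 2) - F 0 = 1 / ((N + 1) * (N + 2)) + 1 / (M * (M + 1))"
    using M by (simp add: F_def field_simps)
  finally show ?thesis by (simp add: f_def)
qed

lemma min_one_le_twice_one_minus_exp:
  fixes t :: real
  assumes t: "0 \<le> t"
  shows "min 1 t \<le> 2 * (1 - exp (- t))"
proof -
  have "exp (- t) \<le> 1 / (1 + t)"
    using exp_ge_add_one_self[of t] t by (simp add: exp_minus field_simps)
  then have "t / (1 + t) \<le> 1 - exp (- t)" using t by (simp add: field_simps)
  moreover have "min 1 t \<le> 2 * (t / (1 + t))"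
    using t mult_left_le_one_le[of t t] by (auto simp: field_simps min_def)
  ultimately show ?thesis by (smt (verit))
qed

lemma sq_div_pronic_le:
  fixes r x :: real and N :: nat
  assumes r: "0 < r" and x: "0 < x" and N: "r * x \<le> N"
  shows "x\<^sup>2 * (1 / (N * (N + 1))) \<le> 1 / r\<^sup>2"
proof -
  have "(r * x)\<^sup>2 \<le> N * (N + 1)"
    using r x power_mono[OF N, of 2] by (simp add: power2_eq_square algebra_simps)
  moreover have "0 < real N" using N r x by (smt (verit) mult_pos_pos)
  ultimately show ?thesis
    using r by (simp add: field_simps power_mult_distrib add_pos_pos)
qed

context p_ex_setting
begin

lemma eff_total_corr_p_ex_le:
  assumes n: "card I0 \<ge> 2" and m: "card I1 \<ge> 2"
  shows "eff_total_corr d (p_ex I0 I1 istar)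
    \<le> ennreal (2 * ln 2 * real d ^ 2 * (1 / (card I0 * (card I0 + 1)) + 1 / (card I1 * (card I1 + 1))))"
proof -
  let ?n = "card I0" and ?m = "card I1"
  define N where "N = ?n - 1"
  have N: "N + 1 = ?n" "N + 2 = ?n + 1" using n by (auto simp: N_def)
  define K where "K = 2 * ln 2 * real d ^ 2"
  define f where "f = (\<lambda>t::real. (exp (- t))\<^sup>2 * (1 - exp (- t)) ^ N + (1 - exp (- t)) * exp (- t) ^ ?m)"
  have K: "0 \<le> K" by (simp add: K_def)
  have pointwise: "min 1 t * calI d (p_ex I0 I1 istar) t \<le> K * f t" if t: "0 < t" for t
  proof -
    define q where "q = 1 - exp (- t)"
    define s where "s = exp (- t)"
    define B where "B = s\<^sup>2 * ln 2 * (q ^ (?n - 2) + s ^ (?m - 2))"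
    have "0 \<le> q" "0 \<le> s" using t by (simp_all add: q_def s_def)
    then have "0 \<le> B" by (simp add: B_def)
    have "min 1 t * calI d (p_ex I0 I1 istar) t \<le> min 1 t * (real d ^ 2 * B)"
      using calI_p_ex_le[OF t] t by (intro mult_left_mono) (auto simp: B_def q_def s_def)
    also have "\<dots> \<le> 2 * q * (real d ^ 2 * B)"
      using min_one_le_twice_one_minus_exp[of t] t \<open>0 \<le> B\<close> by (intro mult_right_mono) (auto simp: q_def)
    also have "\<dots> = K * (s\<^sup>2 * (q * q ^ (?n - 2)) + q * (s\<^sup>2 * s ^ (?m - 2)))"
      by (simp add: K_def B_def algebra_simps)
    also have "q * q ^ (?n - 2) = q ^ N"
      using n by (simp add: N_def Suc_diff_Suc numeral_2_eq_2 flip: power_Suc)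
    also have "s\<^sup>2 * s ^ (?m - 2) = s ^ ?m"
      using m by (metis le_add_diff_inverse power_add)
    finally show ?thesis by (simp add: f_def q_def s_def)
  qed
  have "eff_total_corr d (p_ex I0 I1 istar) \<le> (\<integral>\<^sup>+t. ennreal (K * f t) * indicator {0..} t \<partial>lborel)"
    unfolding eff_total_corr_def
    by (intro nn_integral_mono) (auto simp: indicator_def pointwise ennreal_leI)
  also have "\<dots> = ennreal K * (\<integral>\<^sup>+t. ennreal (f t) * indicator {0..} t \<partial>lborel)"
    using K by (subst nn_integral_cmult[symmetric]) (auto simp: f_def ennreal_mult' mult.assoc)
  also have "(\<integral>\<^sup>+t. ennreal (f t) * indicator {0..} t \<partial>lborel)
      = ennreal (1 / (?n * (?n + 1)) + 1 / (?m * (?m + 1)))"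
    unfolding f_def nn_integral_exp_Beta[of ?m N, OF order.trans[OF one_le_numeral m]] N by simp
  finally show ?thesis
    using K by (simp add: K_def ennreal_mult flip: ennreal_mult')
qed

lemma eff_total_corr_p_ex_le_balanced:
  fixes r :: real
  assumes r: "0 < r" and d: "2 \<le> r * d" and n: "r * d \<le> card I0" and m: "r * d \<le> card I1"
  shows "eff_total_corr d (p_ex I0 I1 istar) \<le> ennreal (4 / r\<^sup>2)"
proof -
  have "0 < real d" using d r by (cases "d = 0") auto
  have "eff_total_corr d (p_ex I0 I1 istar)
      \<le> ennreal (2 * ln 2 * (real d ^ 2 * (1 / (card I0 * (card I0 + 1)))
          + real d ^ 2 * (1 / (card I1 * (card I1 + 1)))))"
    using eff_total_corr_p_ex_le n m d by (simp add: algebra_simps)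
  also have "\<dots> \<le> ennreal (2 * 1 * (1 / r\<^sup>2 + 1 / r\<^sup>2))"
    using sq_div_pronic_le[OF r \<open>0 < real d\<close> n] sq_div_pronic_le[OF r \<open>0 < real d\<close> m]
      ln_le_minus_one[of 2]
    by (intro ennreal_leI mult_mono add_mono) auto
  finally show ?thesis by simp
qed

lemma p_ex_correlation_bounds:
  fixes r :: real
  assumes r: "0 < r" "r \<le> 1" and d: "2 \<le> r * d"
    and n: "r * d \<le> card I0" and m: "r * d \<le> card I1"
  shows "r * ln 2 * d \<le> dual_total_corr d (p_ex I0 I1 istar)"
    and "dual_total_corr d (p_ex I0 I1 istar) \<le> 4 / r\<^sup>2 * d"
    and "r * ln 2 * d \<le> total_corr d (p_ex I0 I1 istar)"
    and "total_corr d (p_ex I0 I1 istar) \<le> 4 / r\<^sup>2 * d"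
proof -
  have "r\<^sup>2 \<le> 1" using r by (intro power_le_one) auto
  then have "1 \<le> 4 / r\<^sup>2" using r by (simp add: field_simps)
  have ln2: "0 < ln (2::real)" "ln (2::real) \<le> 1" using ln_le_minus_one[of 2] by auto
  have lower: "r * ln 2 * d \<le> N * ln 2" if "r * d \<le> N" for N :: nat
    using that ln2 by (simp add: mult_right_mono mult.commute mult.left_commute)
  have upper: "N * ln 2 \<le> 4 / r\<^sup>2 * d" if "N \<le> d" for N :: nat
  proof -
    have "N * ln 2 \<le> N" using ln2 by (simp add: mult_left_le)
    also have "\<dots> \<le> d" using that by simp
    also have "\<dots> \<le> 4 / r\<^sup>2 * d" using mult_right_mono[OF \<open>1 \<le> 4 / r\<^sup>2\<close>, of "real d"] by simp
    finally show ?thesis .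
  qed
  have "I0 \<noteq> {}" using n d by auto
  then show "r * ln 2 * d \<le> dual_total_corr d (p_ex I0 I1 istar)"
    "dual_total_corr d (p_ex I0 I1 istar) \<le> 4 / r\<^sup>2 * d"
    "r * ln 2 * d \<le> total_corr d (p_ex I0 I1 istar)"
    "total_corr d (p_ex I0 I1 istar) \<le> 4 / r\<^sup>2 * d"
    using total_corr_p_ex dual_total_corr_p_ex lower[OF n] lower[OF m]
      upper[of "card I0"] upper[of "card I1"] card_I0_I1 by auto
qed

end

theorem proposition5:
  fixes r0 :: real
  assumes "0 < r0" and "r0 \<le> 1/2"
  shows "\<exists>c C :: real. c > 0 \<and> C > 0 \<and> (\<exists>d0 :: nat. \<forall>d \<ge> d0. \<forall>I0 I1 istar.
           I0 \<union> I1 = {..<d} \<and> I0 \<inter> I1 = {} \<and>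
           real (card I0) \<ge> r0 * real d \<and> real (card I1) \<ge> r0 * real d \<and> istar \<in> I1 \<longrightarrow>
           c * real d \<le> dual_total_corr d (p_ex I0 I1 istar) \<and>
           dual_total_corr d (p_ex I0 I1 istar) \<le> C * real d \<and>
           c * real d \<le> total_corr d (p_ex I0 I1 istar) \<and>
           total_corr d (p_ex I0 I1 istar) \<le> C * real d \<and>
           eff_total_corr d (p_ex I0 I1 istar) \<le> ennreal C)"
proof (rule exI[of _ "r0 * ln 2"], rule exI[of _ "4 / r0\<^sup>2"],
    intro conjI exI[of _ "nat \<lceil>2 / r0\<rceil>"] allI impI)
  show "0 < r0 * ln 2" "0 < 4 / r0\<^sup>2" using assms by simp_all
  fix d :: nat and I0 I1 istar
  assume "nat \<lceil>2 / r0\<rceil> \<le> d" and H: "I0 \<union> I1 = {..<d} \<and> I0 \<inter> I1 = {} \<and>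
    r0 * real d \<le> real (card I0) \<and> r0 * real d \<le> real (card I1) \<and> istar \<in> I1"
  then have "2 / r0 \<le> real d" by linarith
  then have "2 \<le> r0 * real d" using assms by (simp add: field_simps)
  interpret p_ex_setting d I0 I1 istar using H by unfold_locales auto
  have "r0 \<le> 1" using assms by simp
  note bounds = p_ex_correlation_bounds[OF assms(1) this \<open>2 \<le> r0 * real d\<close>]
    eff_total_corr_p_ex_le_balanced[OF assms(1) \<open>2 \<le> r0 * real d\<close>]
  show "r0 * ln 2 * real d \<le> dual_total_corr d (p_ex I0 I1 istar)"
    "dual_total_corr d (p_ex I0 I1 istar) \<le> 4 / r0\<^sup>2 * real d"
    "r0 * ln 2 * real d \<le> total_corr d (p_ex I0 I1 istar)"
    "total_corr d (p_ex I0 I1 istar) \<le> 4 / r0\<^sup>2 * real d"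
    "eff_total_corr d (p_ex I0 I1 istar) \<le> ennreal (4 / r0\<^sup>2)"
    using bounds H by auto
qed

end
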